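(* Let $q,r,\mu,\nu$ be positive integers and $z\in\mathbb{C}$. Define $\mathcal{A}(z)\in\mathbb{C}^{\mu q\times\nu r}$ as the block matrix whose $(i,j)$ block ($i=0,\dots,\mu-1$, $j=0,\dots,\nu-1$) is $A^{i+j}(z)$, define $\bar{\mathcal{A}}\in\mathbb{R}^{\mu q\times \nu r}$ as the block matrix whose $(i,j)$ block is $(S_q^\top)^jA^0S_r^i$, and define $\mathcal{L}_{\mu,q}(z)\in\mathbb{C}^{\mu q\times\mu q}$ as the block lower triangular matrix with $(i,j)$ block $\binom{i}{j}J_q(z)^{i-j}$ for $i\ge j$ and $0$ for $i<j$ ($i,j=0,\dots,\mu-1$), and $\mathcal{L}_{\nu,r}(z)\in\mathbb{C}^{\nu r\times\nu r}$ analogously with $J_r(z)$. Then \[ \mathcal{A}(z)=\mathcal{L}_{\mu,q}(z)\,\bar{\mathcal{A}}\,\mathcal{L}_{\nu,r}(z)^\top , \] in particular $\mathcal{A}(0)=\mathcal{L}_{\mu,q}(0)\bar{\mathcal{A}}\mathcal{L}_{\nu,r}(0)^\top$. Moreover, when these matrices are square, $\det(\mathcal{A}(z))=\det(\bar{\mathcal{A}})$.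
   Context: Matrix indices start at $0$. $S_n\in\mathbb{R}^{n\times n}$ is the shift matrix with $(S_n)_{ij}=\delta_{i+1,j}$, and $J_n(z)=zI_n+S_n^\top$. For $k\ge0$, $A^k(z)\in\mathbb{C}^{q\times r}$ has entries $A^k(z)_{ij}=\frac{1}{i!j!}\frac{d^{i+j}}{dz^{i+j}}z^k=\frac{k!}{i!j!(k-i-j)!}z^{k-i-j}$ (zero if $i+j>k$), $i=0,\dots,q-1$, $j=0,\dots,r-1$, and $A^k:=A^k(0)$; thus $A^0$ has a single nonzero entry $A^0_{00}=1$. *)

theory Defs
  imports Complex_Main "Jordan_Normal_Form.Determinant"
begin

definition shift_mat :: "nat \<Rightarrow> complex mat" where
  "shift_mat n = mat n n (\<lambda>(i,j). if i + 1 = j then 1 else 0)"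

definition Jblk :: "nat \<Rightarrow> complex \<Rightarrow> complex mat" where
  "Jblk n z = z \<cdot>\<^sub>m 1\<^sub>m n + transpose_mat (shift_mat n)"

definition Akz :: "nat \<Rightarrow> nat \<Rightarrow> nat \<Rightarrow> complex \<Rightarrow> complex mat" where
  "Akz q r k z = mat q r (\<lambda>(i,j). if i + j \<le> k
      then (fact k / (fact i * fact j * fact (k - i - j))) * z ^ (k - i - j) else 0)"

definition block_mat :: "nat \<Rightarrow> nat \<Rightarrow> nat \<Rightarrow> nat \<Rightarrow> (nat \<Rightarrow> nat \<Rightarrow> complex mat) \<Rightarrow> complex mat" where
  "block_mat mu nu q r B = mat (mu * q) (nu * r)
      (\<lambda>(a,b). B (a div q) (b div r) $$ (a mod q, b mod r))"

definition calA :: "nat \<Rightarrow> nat \<Rightarrow> nat \<Rightarrow> nat \<Rightarrow> complex \<Rightarrow> complex mat" where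
  "calA q r mu nu z = block_mat mu nu q r (\<lambda>i j. Akz q r (i + j) z)"

definition barA :: "nat \<Rightarrow> nat \<Rightarrow> nat \<Rightarrow> nat \<Rightarrow> complex mat" where
  "barA q r mu nu = block_mat mu nu q r
      (\<lambda>i j. (transpose_mat (shift_mat q) ^\<^sub>m j) * Akz q r 0 0 * (shift_mat r ^\<^sub>m i))"

definition calL :: "nat \<Rightarrow> nat \<Rightarrow> complex \<Rightarrow> complex mat" where
  "calL mu q z = block_mat mu mu q q
      (\<lambda>i j. if j \<le> i then of_nat (i choose j) \<cdot>\<^sub>m (Jblk q z ^\<^sub>m (i - j)) else 0\<^sub>m q q)"

end

theory Submission
  imports Defs
begin

text \<open>Block (i,k) of \<open>calL mu q z\<close> has (s,u) entry
  \<open>(i choose k) * ((i - k) choose (s - u)) * z ^ (i - k - (s - u))\<close>, a trinomial coefficient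
  times a power of z, and \<open>barA\<close> is the 0/1 matrix that pairs position (k,u) of the row blocks
  with position (u,k) of the column blocks. So the (s,t) entry of block (i,j) of
  \<open>calL mu q z * barA q r mu nu * (calL nu r z)\<^sup>T\<close> is \<open>z ^ (i + j - s - t)\<close> times a sum over
  \<open>k \<le> t\<close>, \<open>u \<le> s\<close> of products of two trinomial coefficients. Two applications of
  Vandermonde's identity turn that sum into \<open>(i + j)! / (s! t! (i + j - s - t)!)\<close>, which is the
  (s,t) entry of \<open>A^(i+j)(z)\<close>. The determinant identity holds because \<open>calL\<close> is lower
  unitriangular.\<close>

definition trinomial :: "nat \<Rightarrow> nat \<Rightarrow> nat \<Rightarrow> nat" where
  "trinomial n a b = (n choose a) * ((n - a) choose b)"

lemma trinomial_eq_0_iff: "trinomial n a b = 0 \<longleftrightarrow> n < a + b"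
  by (auto simp: trinomial_def)

lemma trinomial_same_0 [simp]: "trinomial n n 0 = 1"
  by (simp add: trinomial_def)

lemma of_nat_trinomial:
  assumes "a + b \<le> n"
  shows "(of_nat (trinomial n a b) :: 'a :: field_char_0)
    = fact n / (fact a * fact b * fact (n - a - b))"
proof -
  have "(of_nat (trinomial n a b) :: 'a)
      = fact n / (fact a * fact (n - a)) * (fact (n - a) / (fact b * fact (n - a - b)))"
    using assms by (simp add: trinomial_def binomial_fact)
  then show ?thesis by (simp add: field_simps)
qed

lemma trinomial_commute: "trinomial n a b = trinomial n b a"
proof (cases "a + b \<le> n")
  case True
  then have "(of_nat (trinomial n a b) :: real) = of_nat (trinomial n b a)"
    by (simp add: of_nat_trinomial add.commute diff_diff_add mult.commute mult.left_commute)
  then show ?thesis by (simp only: of_nat_eq_iff)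
next
  case False
  then show ?thesis by (simp add: trinomial_eq_0_iff[THEN iffD2] add.commute)
qed

lemma trinomial_vandermonde:
  "(\<Sum>k\<le>t. \<Sum>u\<le>s. trinomial i k (s - u) * trinomial j u (t - k)) = trinomial (i + j) t s"
proof -
  have "(\<Sum>u\<le>s. trinomial i k (s - u) * trinomial j u (t - k))
      = (i choose k) * (j choose (t - k)) * ((i + j - t) choose s)" if "k \<le> t" for k
  proof (cases "k \<le> i \<and> t - k \<le> j")
    case True
    have "trinomial i k (s - u) * trinomial j u (t - k)
        = (i choose k) * (j choose (t - k))
          * (((j - (t - k)) choose u) * ((i - k) choose (s - u)))" for u
      by (subst trinomial_commute[of j u]) (simp add: trinomial_def)
    then have "(\<Sum>u\<le>s. trinomial i k (s - u) * trinomial j u (t - k))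
        = (i choose k) * (j choose (t - k))
          * (\<Sum>u\<le>s. ((j - (t - k)) choose u) * ((i - k) choose (s - u)))"
      by (simp add: sum_distrib_left)
    also have "\<dots> = (i choose k) * (j choose (t - k)) * (((i - k) + (j - (t - k))) choose s)"
      by (simp add: vandermonde add.commute)
    also have "(i - k) + (j - (t - k)) = i + j - t"
      using True that by linarith
    finally show ?thesis .
  next
    case False
    then show ?thesis
      by (auto simp: trinomial_eq_0_iff binomial_eq_0 intro!: sum.neutral)
  qed
  then have "(\<Sum>k\<le>t. \<Sum>u\<le>s. trinomial i k (s - u) * trinomial j u (t - k))
      = (\<Sum>k\<le>t. (i choose k) * (j choose (t - k))) * ((i + j - t) choose s)"
    by (simp add: sum_distrib_right)
  then show ?thesis
    by (simp add: vandermonde trinomial_def)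
qed

lemma trinomial_power_mult:
  fixes z :: "'a :: comm_semiring_1"
  assumes "k \<le> t" "u \<le> s"
  shows "of_nat (trinomial i k (s - u)) * z ^ (i - k - (s - u))
      * (of_nat (trinomial j u (t - k)) * z ^ (j - u - (t - k)))
    = of_nat (trinomial i k (s - u) * trinomial j u (t - k)) * z ^ (i + j - s - t)"
proof (cases "trinomial i k (s - u) = 0 \<or> trinomial j u (t - k) = 0")
  case True
  then show ?thesis by auto
next
  case False
  then have "i - k - (s - u) + (j - u - (t - k)) = i + j - s - t"
    using assms unfolding trinomial_eq_0_iff by arith
  then show ?thesis
    by (simp add: power_add[symmetric] ac_simps)
qed

lemma binomial_power_pascal:
  fixes z :: "'a :: comm_semiring_1"
  shows "of_nat (n choose Suc e) * z ^ (n - Suc e) * z + of_nat (n choose e) * z ^ (n - e)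
    = of_nat (Suc n choose Suc e) * z ^ (n - e)"
proof (cases "e < n")
  case True
  then have "of_nat (n choose Suc e) * z ^ (n - Suc e) * z = of_nat (n choose Suc e) * z ^ (n - e)"
    by (metis Suc_diff_Suc power_Suc2 mult.assoc)
  then show ?thesis by (simp add: algebra_simps)
next
  case False
  then show ?thesis by (cases "e = n") (simp_all add: binomial_eq_0)
qed

lemma block_index_less: "i < m \<Longrightarrow> s < q \<Longrightarrow> i * q + s < m * (q :: nat)"
proof -
  assume "i < m" "s < q"
  then have "Suc i * q \<le> m * q" by (intro mult_le_mono1) simp
  with \<open>s < q\<close> show ?thesis by simp
qed

lemma block_mat_index:
  assumes "i < mu" "s < q" "j < nu" "t < r"
  shows "block_mat mu nu q r B $$ (i * q + s, j * r + t) = B i j $$ (s, t)"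
  using assms by (simp add: block_mat_def block_index_less)

lemma dim_block_mat [simp]:
  "dim_row (block_mat mu nu q r B) = mu * q" "dim_col (block_mat mu nu q r B) = nu * r"
  by (simp_all add: block_mat_def)

lemma block_mat_carrier: "block_mat mu nu q r B \<in> carrier_mat (mu * q) (nu * r)"
  by (simp add: carrier_matI)

lemma block_mat_eqI:
  assumes "M \<in> carrier_mat (mu * q) (nu * r)"
    and "\<And>i s j t. i < mu \<Longrightarrow> s < q \<Longrightarrow> j < nu \<Longrightarrow> t < r
      \<Longrightarrow> M $$ (i * q + s, j * r + t) = B i j $$ (s, t)"
  shows "block_mat mu nu q r B = M"
proof (rule eq_matI)
  fix a b assume "a < dim_row M" "b < dim_col M"
  then have a: "a < mu * q" and b: "b < nu * r" using assms(1) by auto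
  then have "q > 0" "r > 0" by (auto intro: gr0I)
  have "M $$ (a, b) = M $$ ((a div q) * q + a mod q, (b div r) * r + b mod r)" by simp
  also have "\<dots> = B (a div q) (b div r) $$ (a mod q, b mod r)"
    using a b \<open>q > 0\<close> \<open>r > 0\<close> by (intro assms(2)) (auto simp: less_mult_imp_div_less)
  finally show "block_mat mu nu q r B $$ (a, b) = M $$ (a, b)"
    using a b by (simp add: block_mat_def)
qed (use assms(1) in auto)

lemma sum_lessThan_mult_blocks:
  fixes f :: "nat \<Rightarrow> 'a :: comm_monoid_add"
  shows "(\<Sum>c < m * q. f c) = (\<Sum>k < m. \<Sum>u < q. f (k * q + u))"
proof -
  have "(\<Sum>c < m * q. f c) = (\<Sum>k < m. sum f {k * q..<k * q + q})"
    by (simp add: sum.nat_group)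
  also have "\<dots> = (\<Sum>k < m. \<Sum>u < q. f (k * q + u))"
    by (simp add: sum.shift_bounds_nat_ivl[of f 0 _ q, simplified] atLeast0LessThan add.commute)
  finally show ?thesis .
qed

lemma mult_mult_transpose_index:
  assumes "A \<in> carrier_mat m n" "B \<in> carrier_mat n p" "C \<in> carrier_mat l p" "a < m" "b < l"
  shows "(A * B * transpose_mat C) $$ (a, b)
    = (\<Sum>c<n. \<Sum>d<p. A $$ (a, c) * B $$ (c, d) * C $$ (b, d))"
  using assms
  by (simp add: scalar_prod_def lessThan_atLeast0 sum_distrib_left mult.assoc)

lemma dim_shift_mat [simp]: "dim_row (shift_mat n) = n" "dim_col (shift_mat n) = n"
  by (simp_all add: shift_mat_def)

lemma dim_Jblk [simp]: "dim_row (Jblk n z) = n" "dim_col (Jblk n z) = n"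
  by (simp_all add: Jblk_def)

lemma shift_mat_index:
  "s < n \<Longrightarrow> u < n \<Longrightarrow> shift_mat n $$ (s, u) = (if s + 1 = u then 1 else 0)"
  by (simp add: shift_mat_def)

lemma Jblk_index:
  "s < n \<Longrightarrow> u < n
    \<Longrightarrow> Jblk n z $$ (s, u) = (if s = u then z else if s = u + 1 then 1 else 0)"
  by (auto simp: Jblk_def shift_mat_def)

lemma Jblk_pow_index:
  assumes "s < n" "u < n"
  shows "(Jblk n z ^\<^sub>m k) $$ (s, u)
    = (if u \<le> s then of_nat (k choose (s - u)) * z ^ (k - (s - u)) else 0)"
  using assms(2)
proof (induction k arbitrary: u)
  case 0
  with assms(1) show ?case by simp
next
  case (Suc k)
  let ?P = "Jblk n z ^\<^sub>m k"
  have "(Jblk n z ^\<^sub>m Suc k) $$ (s, u) = (\<Sum>w<n. ?P $$ (s, w) * Jblk n z $$ (w, u))"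
    using assms(1) Suc.prems by (simp add: scalar_prod_def lessThan_atLeast0)
  also have "\<dots> = (\<Sum>w<n. (if w = u then ?P $$ (s, w) * z else 0)
      + (if w = u + 1 then ?P $$ (s, w) else 0))"
    using Suc.prems by (intro sum.cong) (auto simp: Jblk_index)
  also have "\<dots> = ?P $$ (s, u) * z + (if u + 1 < n then ?P $$ (s, u + 1) else 0)"
    using Suc.prems by (simp add: sum.distrib)
  also have "\<dots> = (if u \<le> s then of_nat (Suc k choose (s - u)) * z ^ (Suc k - (s - u)) else 0)"
  proof (cases "u < s")
    case True
    define e where "e = s - (u + 1)"
    have e: "s - u = Suc e" "s - (u + 1) = e"
      using True by (simp_all add: e_def)
    have "u + 1 < n" using True assms(1) by simp
    then show ?thesis
      using True e Suc.IH[of u] Suc.IH[of "u + 1"] Suc.prems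
      by (simp add: binomial_power_pascal)
  next
    case False
    then show ?thesis
      using Suc.IH[of u] Suc.IH[of "u + 1"] Suc.prems assms(1) by auto
  qed
  finally show ?case .
qed

lemma shift_mat_pow_index:
  assumes "w < n" "v < n"
  shows "(shift_mat n ^\<^sub>m k) $$ (w, v) = (if v = w + k then 1 else 0)"
  using assms(2)
proof (induction k arbitrary: v)
  case 0
  with assms(1) show ?case by simp
next
  case (Suc k)
  have "(shift_mat n ^\<^sub>m Suc k) $$ (w, v)
      = (\<Sum>x<n. (shift_mat n ^\<^sub>m k) $$ (w, x) * shift_mat n $$ (x, v))"
    using assms(1) Suc.prems by (simp add: scalar_prod_def lessThan_atLeast0)
  also have "\<dots> = (\<Sum>x<n. if x = w + k then (if v = w + Suc k then 1 else 0) else 0)"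
    using Suc.prems by (intro sum.cong) (auto simp: Suc.IH shift_mat_index)
  finally show ?case
    using Suc.prems by simp
qed

lemma transpose_shift_mat_pow_index:
  assumes "u < n" "w < n"
  shows "(transpose_mat (shift_mat n) ^\<^sub>m l) $$ (u, w) = (if u = w + l then 1 else 0)"
  using assms(2)
proof (induction l arbitrary: w)
  case 0
  with assms(1) show ?case by simp
next
  case (Suc l)
  have "(transpose_mat (shift_mat n) ^\<^sub>m Suc l) $$ (u, w)
      = (\<Sum>x<n. (transpose_mat (shift_mat n) ^\<^sub>m l) $$ (u, x)
          * transpose_mat (shift_mat n) $$ (x, w))"
    using assms(1) Suc.prems by (simp add: scalar_prod_def lessThan_atLeast0)
  also have "\<dots> = (\<Sum>x<n. if x = w + 1 then (if u = w + Suc l then 1 else 0) else 0)"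
    using Suc.prems by (intro sum.cong) (auto simp: Suc.IH shift_mat_index)
  finally show ?case
    using assms(1) Suc.prems by auto
qed

lemma dim_Akz [simp]: "dim_row (Akz q r k z) = q" "dim_col (Akz q r k z) = r"
  by (simp_all add: Akz_def)

lemma Akz_index:
  assumes "s < q" "t < r"
  shows "Akz q r k z $$ (s, t) = of_nat (trinomial k t s) * z ^ (k - s - t)"
proof (cases "s + t \<le> k")
  case True
  then show ?thesis
    using assms by (simp add: Akz_def of_nat_trinomial add.commute diff_diff_add mult.commute)
next
  case False
  then have "trinomial k t s = 0" by (simp add: trinomial_eq_0_iff)
  with False assms show ?thesis by (simp add: Akz_def)
qed

lemma mult_Akz_0_mult_index:
  assumes "X \<in> carrier_mat m q" "Y \<in> carrier_mat r n" "u < m" "v < n" "q > 0" "r > 0"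
  shows "(X * Akz q r 0 0 * Y) $$ (u, v) = X $$ (u, 0) * Y $$ (0, v)"
proof -
  have XA: "(X * Akz q r 0 0) $$ (u, w) = (if w = 0 then X $$ (u, 0) else 0)" if "w < r" for w
  proof -
    have "(X * Akz q r 0 0) $$ (u, w) = (\<Sum>x<q. X $$ (u, x) * Akz q r 0 0 $$ (x, w))"
      using assms that by (simp add: scalar_prod_def lessThan_atLeast0)
    also have "\<dots> = (\<Sum>x<q. if x = 0 then (if w = 0 then X $$ (u, 0) else 0) else 0)"
      using that by (intro sum.cong) (auto simp: Akz_def)
    finally show ?thesis using assms by simp
  qed
  have "(X * Akz q r 0 0 * Y) $$ (u, v)
      = (\<Sum>w<r. (X * Akz q r 0 0) $$ (u, w) * Y $$ (w, v))"
    using assms by (simp add: scalar_prod_def lessThan_atLeast0)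
  also have "\<dots> = (\<Sum>w<r. if w = 0 then X $$ (u, 0) * Y $$ (0, v) else 0)"
    by (intro sum.cong) (auto simp: XA)
  finally show ?thesis using assms by simp
qed

lemma calL_carrier [simp]: "calL mu q z \<in> carrier_mat (mu * q) (mu * q)"
  unfolding calL_def by (rule block_mat_carrier)

lemma barA_carrier [simp]: "barA q r mu nu \<in> carrier_mat (mu * q) (nu * r)"
  unfolding barA_def by (rule block_mat_carrier)

lemma barA_index:
  assumes "k < mu" "u < q" "l < nu" "v < r"
  shows "barA q r mu nu $$ (k * q + u, l * r + v) = (if u = l \<and> v = k then 1 else 0)"
proof -
  have "barA q r mu nu $$ (k * q + u, l * r + v)
      = (transpose_mat (shift_mat q) ^\<^sub>m l * Akz q r 0 0 * shift_mat r ^\<^sub>m k) $$ (u, v)"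
    unfolding barA_def using assms by (rule block_mat_index)
  also have "\<dots> = (transpose_mat (shift_mat q) ^\<^sub>m l) $$ (u, 0) * (shift_mat r ^\<^sub>m k) $$ (0, v)"
    using assms by (intro mult_Akz_0_mult_index) (auto intro: carrier_matI)
  also have "\<dots> = (if u = l \<and> v = k then 1 else 0)"
    using assms by (simp add: transpose_shift_mat_pow_index shift_mat_pow_index)
  finally show ?thesis .
qed

lemma calL_index:
  assumes "i < mu" "s < q" "k < mu" "u < q"
  shows "calL mu q z $$ (i * q + s, k * q + u)
    = (if u \<le> s then of_nat (trinomial i k (s - u)) * z ^ (i - k - (s - u)) else 0)"
proof -
  have "calL mu q z $$ (i * q + s, k * q + u)
      = (if k \<le> i then of_nat (i choose k) \<cdot>\<^sub>m (Jblk q z ^\<^sub>m (i - k)) else 0\<^sub>m q q) $$ (s, u)"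
    unfolding calL_def using assms by (rule block_mat_index)
  also have "\<dots> = (if u \<le> s then of_nat (trinomial i k (s - u)) * z ^ (i - k - (s - u)) else 0)"
  proof (cases "k \<le> i")
    case True
    then show ?thesis
      using assms by (simp add: Jblk_pow_index trinomial_def)
  next
    case False
    then show ?thesis
      using assms by (simp add: trinomial_def)
  qed
  finally show ?thesis .
qed

lemma mult_barA_mult_transpose_index:
  assumes "X \<in> carrier_mat m (mu * q)" "Y \<in> carrier_mat n (nu * r)" "a < m" "b < n"
  shows "(X * barA q r mu nu * transpose_mat Y) $$ (a, b)
    = (\<Sum>(k, u) \<in> {..<min mu r} \<times> {..<min q nu}. X $$ (a, k * q + u) * Y $$ (b, u * r + k))"
proof -
  let ?f = "\<lambda>k u l v.
    X $$ (a, k * q + u) * barA q r mu nu $$ (k * q + u, l * r + v) * Y $$ (b, l * r + v)"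
  have transposed_pair: "(\<Sum>l<nu. \<Sum>v<r. ?f k u l v)
      = (if k < r \<and> u < nu then X $$ (a, k * q + u) * Y $$ (b, u * r + k) else 0)"
    if "k < mu" "u < q" for k u
  proof -
    have "(\<Sum>l<nu. \<Sum>v<r. ?f k u l v) = (\<Sum>(l, v) \<in> {..<nu} \<times> {..<r}. ?f k u l v)"
      by (simp add: sum.cartesian_product)
    also have "\<dots> = (\<Sum>x \<in> {..<nu} \<times> {..<r}.
        if x = (u, k) then X $$ (a, k * q + u) * Y $$ (b, u * r + k) else 0)"
      by (intro sum.cong refl) (use that in \<open>auto simp: barA_index split: if_splits\<close>)
    finally show ?thesis by auto
  qed
  have "(X * barA q r mu nu * transpose_mat Y) $$ (a, b)
      = (\<Sum>c<mu * q. \<Sum>d<nu * r. X $$ (a, c) * barA q r mu nu $$ (c, d) * Y $$ (b, d))"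
    using assms by (intro mult_mult_transpose_index) simp_all
  also have "\<dots> = (\<Sum>k<mu. \<Sum>u<q. \<Sum>l<nu. \<Sum>v<r. ?f k u l v)"
    by (simp add: sum_lessThan_mult_blocks)
  also have "\<dots> = (\<Sum>(k, u) \<in> {..<mu} \<times> {..<q}.
      if k < r \<and> u < nu then X $$ (a, k * q + u) * Y $$ (b, u * r + k) else 0)"
    unfolding sum.cartesian_product[symmetric] by (intro sum.cong refl) (simp add: transposed_pair)
  also have "\<dots> = (\<Sum>(k, u) \<in> {..<min mu r} \<times> {..<min q nu}.
      X $$ (a, k * q + u) * Y $$ (b, u * r + k))"
    by (intro sum.mono_neutral_cong_right) (auto split: if_splits)
  finally show ?thesis .
qed

lemma calL_barA_calL_index:
  assumes "i < mu" "s < q" "j < nu" "t < r"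
  shows "(calL mu q z * barA q r mu nu * transpose_mat (calL nu r z)) $$ (i * q + s, j * r + t)
    = Akz q r (i + j) z $$ (s, t)"
proof -
  let ?g = "\<lambda>(k, u).
      calL mu q z $$ (i * q + s, k * q + u) * calL nu r z $$ (j * r + t, u * r + k)"
    and ?h = "\<lambda>(k, u). of_nat (trinomial i k (s - u) * trinomial j u (t - k)) * z ^ (i + j - s - t)"
    and ?S = "{..<min mu r} \<times> {..<min q nu}"
  have "(calL mu q z * barA q r mu nu * transpose_mat (calL nu r z)) $$ (i * q + s, j * r + t)
      = sum ?g ?S"
    using assms by (intro mult_barA_mult_transpose_index[where m = "mu * q" and n = "nu * r"])
      (simp_all add: block_index_less)
  txt \<open>Beyond \<open>k \<le> t\<close>, \<open>u \<le> s\<close> a power of a Jordan block is read above its diagonal;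
    inside, the pairs missing from \<open>?S\<close> have a vanishing trinomial coefficient.\<close>
  also have "\<dots> = sum ?h ({..t} \<times> {..s})"
  proof (rule sum.mono_neutral_cong)
    show "?h x = 0" if "x \<in> {..t} \<times> {..s} - ?S" for x
      using that assms by (auto simp: trinomial_eq_0_iff)
    show "?g x = 0" if "x \<in> ?S - {..t} \<times> {..s}" for x
      using that assms by (auto simp: calL_index split: if_split_asm)
    show "?g x = ?h x" if "x \<in> ?S \<inter> {..t} \<times> {..s}" for x
    proof -
      obtain k u where "x = (k, u)"
        by fastforce
      with that assms have x: "x = (k, u)" "k \<le> t" "u \<le> s"
        and "calL mu q z $$ (i * q + s, k * q + u)
          = of_nat (trinomial i k (s - u)) * z ^ (i - k - (s - u))"
        and "calL nu r z $$ (j * r + t, u * r + k)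
          = of_nat (trinomial j u (t - k)) * z ^ (j - u - (t - k))"
        by (auto simp: calL_index)
      then show ?thesis
        by (simp only: prod.case trinomial_power_mult)
    qed
  qed auto
  also have "\<dots> = of_nat (\<Sum>k\<le>t. \<Sum>u\<le>s. trinomial i k (s - u) * trinomial j u (t - k))
      * z ^ (i + j - s - t)"
    by (simp add: sum.cartesian_product[symmetric] sum_distrib_right)
  also have "\<dots> = Akz q r (i + j) z $$ (s, t)"
    using assms by (simp add: trinomial_vandermonde Akz_index)
  finally show ?thesis .
qed

lemma calA_eq_calL_barA_calL:
  "calA q r mu nu z = calL mu q z * barA q r mu nu * transpose_mat (calL nu r z)"
  unfolding calA_def
proof (rule block_mat_eqI)
  show "calL mu q z * barA q r mu nu * transpose_mat (calL nu r z)
      \<in> carrier_mat (mu * q) (nu * r)"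
    by (intro mult_carrier_mat[where n = "nu * r"] mult_carrier_mat[where n = "mu * q"])
      simp_all
qed (rule calL_barA_calL_index)

lemma det_calL: "det (calL mu q z) = 1"
proof -
  have upper_zero: "calL mu q z $$ (a, c) = 0" if "a < c" "c < mu * q" for a c
  proof -
    have "q > 0" using that by (auto intro: gr0I)
    define i s k u where "i = a div q" "s = a mod q" "k = c div q" "u = c mod q"
    have a: "a = i * q + s" and c: "c = k * q + u"
      by (simp_all add: i_s_k_u_def)
    have "i < mu" "s < q" "k < mu" "u < q"
      using that \<open>q > 0\<close> by (auto simp: i_s_k_u_def less_mult_imp_div_less)
    moreover have "i < k" if "u \<le> s"
    proof -
      have "i * q < k * q"
        using \<open>a < c\<close> that unfolding a c by linarith
      then show ?thesis by simp
    qed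
    ultimately show ?thesis
      unfolding a c by (auto simp: calL_index trinomial_eq_0_iff)
  qed
  have diagonal_one: "calL mu q z $$ (a, a) = 1" if "a < mu * q" for a
  proof -
    have "q > 0" using that by (auto intro: gr0I)
    then have "calL mu q z $$ ((a div q) * q + a mod q, (a div q) * q + a mod q) = 1"
      using that by (subst calL_index) (auto simp: less_mult_imp_div_less)
    then show ?thesis by simp
  qed
  have "det (calL mu q z) = prod_list (diag_mat (calL mu q z))"
    using upper_zero calL_carrier by (rule det_lower_triangular)
  also have "diag_mat (calL mu q z) = map (\<lambda>_. 1) [0..<mu * q]"
    using carrier_matD[OF calL_carrier] unfolding diag_mat_def
    by (auto intro!: map_cong diagonal_one)
  finally show ?thesis
    by (simp add: map_replicate_const)
qed

lemma det_calA_eq_det_barA: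
  assumes square: "mu * q = nu * r"
  shows "det (calA q r mu nu z) = det (barA q r mu nu)"
proof -
  have L: "calL mu q z \<in> carrier_mat (mu * q) (mu * q)"
    by simp
  have B: "barA q r mu nu \<in> carrier_mat (mu * q) (mu * q)"
    using barA_carrier[of q r mu nu] by (simp only: square)
  have L': "transpose_mat (calL nu r z) \<in> carrier_mat (mu * q) (mu * q)"
    using square by simp
  have "det (calA q r mu nu z)
      = det (calL mu q z * barA q r mu nu) * det (transpose_mat (calL nu r z))"
    unfolding calA_eq_calL_barA_calL using mult_carrier_mat[OF L B] L' by (rule det_mult)
  also have "det (calL mu q z * barA q r mu nu) = det (calL mu q z) * det (barA q r mu nu)"
    using L B by (rule det_mult)
  also have "det (calL mu q z) = 1"
    by (rule det_calL)
  also have "det (transpose_mat (calL nu r z)) = 1"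
    using L' by (simp add: det_transpose det_calL)
  finally show ?thesis
    by simp
qed

theorem theorem2p2:
  fixes q r mu nu :: nat and z :: complex
  assumes "q > 0" "r > 0" "mu > 0" "nu > 0"
  shows "calA q r mu nu z = calL mu q z * barA q r mu nu * transpose_mat (calL nu r z)
    \<and> calA q r mu nu 0 = calL mu q 0 * barA q r mu nu * transpose_mat (calL nu r 0)
    \<and> (mu * q = nu * r \<longrightarrow> det (calA q r mu nu z) = det (barA q r mu nu))"
  using calA_eq_calL_barA_calL det_calA_eq_det_barA by blast

end
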